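(* Let $\mathcal{L}:\mathbb{R}^n\to\mathbb{R}$ be a differentiable loss of the network weight $w$, reparameterized by hidden weight $\theta\in\mathbb{R}^n$ and a global scalar threshold $d\ge0$ as $w(\theta,d)=\mathcal{S}_d(\theta)$. Run vanilla SGD on the hidden weight with learning rate $\eta^{(t)}>0$ and threshold $d^{(t)}$ at iteration $t$: $$\theta^{(t+1)}=\theta^{(t)}-\eta^{(t)}\,\nabla_w\mathcal{L}(w^{(t)})\odot\nabla_\theta w(\theta^{(t)},d^{(t)}),\qquad w^{(t)}=\mathcal{S}_{d^{(t)}}(\theta^{(t)}),$$ where the $i$-th component of $\nabla_\theta w(\theta^{(t)},d^{(t)})$ is the derivative of $\theta\mapsto\mathcal{S}_{d^{(t)}}(\theta)$ at $\theta_i^{(t)}$ whenever $|\theta_i^{(t)}|\ne d^{(t)}$. Then the update is locally equivalent to ISTA applied to $$\min_w\Big\{F(w):=\mathcal{L}(w)+\frac{d^{(t+1)}-d^{(t)}}{\eta^{(t)}}\|w\|_1\Big\}$$ with step size $\eta^{(t)}$: namely, for every nonzero component $w_i^{(t)}\neq0$ with $|\theta_i^{(t+1)}|>d^{(t)}$ and $\operatorname{sign}(\theta_i^{(t+1)})=\operatorname{sign}(\theta_i^{(t)})$, one has $w_i^{(t+1)}=\big[\mathcal{S}_{\mu^{(t)}\eta^{(t)}}\big(w^{(t)}-\eta^{(t)}\nabla\mathcal{L}(w^{(t)})\big)\big]_i$ with $\mu^{(t)}=(d^{(t+1)}-d^{(t)})/\eta^{(t)}$, which is the ISTA update for the $L_1$-penalized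 objective $\mathcal{L}(w)+\mu^{(t)}\|w\|_1$.
   Context: $\odot$ is the element-wise product. The soft threshold mapping is $\mathcal{S}_d(x)_i=\operatorname{sign}(x_i)\max\{|x_i|-d,0\}$. The ISTA (proximal gradient) update with step size $\eta$ for $\min_x f(x)+\mu\|x\|_1$ is $x^{(t+1)}=\mathcal{S}_{\mu\eta}(x^{(t)}-\eta\nabla f(x^{(t)}))$. *)

theory Defs
  imports "HOL-Analysis.Analysis"
begin

definition soft_thr :: "real \<Rightarrow> real \<Rightarrow> real" where
  "soft_thr d x = sgn x * max (\<bar>x\<bar> - d) 0"

definition vsoft :: "real \<Rightarrow> real ^ 'n \<Rightarrow> real ^ 'n" where
  "vsoft d x = (\<chi> i. soft_thr d (x $ i))"

definition hadamard :: "real ^ 'n \<Rightarrow> real ^ 'n \<Rightarrow> real ^ 'n" where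
  "hadamard x y = (\<chi> i. x $ i * y $ i)"

definition ista_step :: "(real ^ 'n \<Rightarrow> real ^ 'n) \<Rightarrow> real \<Rightarrow> real \<Rightarrow> real ^ 'n \<Rightarrow> real ^ 'n" where
  "ista_step gradf mu eta x = vsoft (mu * eta) (x - eta *\<^sub>R gradf x)"

end

theory Submission
  imports Defs
begin

text \<open>Away from the threshold, \<open>soft_thr d\<close> is the translation \<open>\<theta> \<mapsto> \<theta> - sgn \<theta> * d\<close>, so it
  has derivative 1 there and the SGD step on \<open>\<theta>\<close> is a plain gradient step, which translates
  into a gradient step on \<open>w\<close>. As long as \<open>\<theta>\<close> stays on the same branch, the new weight is
  obtained from that gradient step by thresholding with the increment \<open>d (Suc t) - d t\<close>,
  because soft thresholds compose additively beyond the first threshold.\<close>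

lemma soft_thr_nonzero_iff: "soft_thr d x \<noteq> 0 \<longleftrightarrow> x \<noteq> 0 \<and> d < \<bar>x\<bar>"
  by (auto simp: soft_thr_def sgn_if max_def)

lemma soft_thr_outside:
  assumes "d < \<bar>x\<bar>" "x \<noteq> 0"
  shows "soft_thr d x = x - sgn x * d"
  using assms by (auto simp: soft_thr_def sgn_if max_def)

lemma soft_thr_soft_thr:
  assumes "d < \<bar>x\<bar>"
  shows "soft_thr e (soft_thr d x) = soft_thr (d + e) x"
  using assms by (auto simp: soft_thr_def sgn_if max_def abs_mult)

lemma DERIV_soft_thr_outside:
  assumes "d < \<bar>x\<bar>" "x \<noteq> 0"
  shows "(soft_thr d has_real_derivative 1) (at x)"
proof -
  have "((\<lambda>y. y - sgn x * d) has_real_derivative 1) (at x)"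
    by (auto intro!: derivative_eq_intros)
  moreover define S where "S = (if x > 0 then {max d 0<..} else {..<min (- d) 0})"
  then have "open S" "x \<in> S" "\<forall>y\<in>S. y - sgn x * d = soft_thr d y"
    using assms by (auto simp: soft_thr_def sgn_if max_def min_def)
  ultimately show ?thesis
    using has_field_derivative_transform_within_open by blast
qed

theorem theorem1:
  fixes L :: "real ^ 'n \<Rightarrow> real"
    and gradL :: "real ^ 'n \<Rightarrow> real ^ 'n"
    and \<theta> :: "nat \<Rightarrow> real ^ 'n"
    and d :: "nat \<Rightarrow> real"
    and \<eta> :: "nat \<Rightarrow> real"
    and Dw :: "nat \<Rightarrow> real ^ 'n"
    and w :: "nat \<Rightarrow> real ^ 'n"
    and t :: nat and i :: 'n
  assumes grad: "\<And>x. (L has_derivative (\<lambda>h. gradL x \<bullet> h)) (at x)"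
    and d_nonneg: "\<And>s. d s \<ge> 0"
    and eta_pos: "\<And>s. \<eta> s > 0"
    and w_def: "\<And>s. w s = vsoft (d s) (\<theta> s)"
    and Dw_deriv: "\<And>s j. \<bar>\<theta> s $ j\<bar> \<noteq> d s \<Longrightarrow>
                      (soft_thr (d s) has_real_derivative (Dw s $ j)) (at (\<theta> s $ j))"
    and sgd: "\<And>s. \<theta> (Suc s) = \<theta> s - \<eta> s *\<^sub>R hadamard (gradL (w s)) (Dw s)"
    and nz: "w t $ i \<noteq> 0"
    and big: "\<bar>\<theta> (Suc t) $ i\<bar> > d t"
    and same_sign: "sgn (\<theta> (Suc t) $ i) = sgn (\<theta> t $ i)"
  shows "w (Suc t) $ i
           = ista_step gradL ((d (Suc t) - d t) / \<eta> t) (\<eta> t) (w t) $ i"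
proof -
  define x x' g where "x = \<theta> t $ i" and "x' = \<theta> (Suc t) $ i" and "g = gradL (w t) $ i"
  have w_t: "w t $ i = soft_thr (d t) x"
    by (simp add: w_def vsoft_def x_def)
  then have x_out: "x \<noteq> 0" "d t < \<bar>x\<bar>"
    using nz soft_thr_nonzero_iff by auto
  have "Dw t $ i = 1"
    using Dw_deriv[of t i] DERIV_soft_thr_outside[OF x_out(2,1)] DERIV_unique x_out
    by (fastforce simp: x_def)
  then have gradient_step: "x' = x - \<eta> t * g"
    by (simp add: sgd x'_def x_def g_def hadamard_def)
  have "x' \<noteq> 0"
    using same_sign x_out(1) by (auto simp: x_def x'_def sgn_0_0)
  then have "soft_thr (d t) x' = x' - sgn x * d t"
    using soft_thr_outside big same_sign by (simp add: x_def x'_def)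
  with gradient_step have "w t $ i - \<eta> t * g = soft_thr (d t) x'"
    using w_t soft_thr_outside[OF x_out(2,1)] by simp
  then have "ista_step gradL ((d (Suc t) - d t) / \<eta> t) (\<eta> t) (w t) $ i
      = soft_thr (d (Suc t) - d t) (soft_thr (d t) x')"
    using eta_pos[of t] by (simp add: ista_step_def vsoft_def g_def)
  also have "\<dots> = soft_thr (d (Suc t)) x'"
    using big soft_thr_soft_thr by (simp add: x'_def)
  also have "\<dots> = w (Suc t) $ i"
    by (simp add: w_def vsoft_def x'_def)
  finally show ?thesis ..
qed

end
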